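(* Let $\rho$ be a bi-invariant pseudometric on $\mathrm{Ham}(M,\Omega)$ and let $A\subset M$ be a nonempty open subset. Then for all $\phi,\psi\in\mathrm{Ham}(M,\Omega)$ with $\operatorname{supp}\phi\subset A$ and $\operatorname{supp}\psi\subset A$, $$e(A)\ \ge\ \tfrac14\,\rho(\mathrm{id},[\phi,\psi]),\qquad [\phi,\psi]:=\psi^{-1}\phi^{-1}\psi\phi .$$
   Context: $(M,\Omega)$ is a connected symplectic manifold without boundary and $\mathrm{Ham}(M,\Omega)$ is its group of (compactly supported) Hamiltonian diffeomorphisms, i.e. time-one maps of flows of time-dependent normalized Hamiltonians. A bi-invariant pseudometric is a function $\rho$ on $\mathrm{Ham}\times\mathrm{Ham}$ which is nonnegative, symmetric, vanishes on the diagonal, satisfies the triangle inequality, and satisfies $\rho(\phi,\psi)=\rho(\phi\theta,\psi\theta)=\rho(\theta\phi,\theta\psi)$ for all $\phi,\psi,\theta$ (it need not separate points). The support $\operatorname{supp}\phi$ is the closure of $\{x:\phi(x)\neq x\}$. The displacement energy of a subset $A$ is $e(A)=\inf\{\rho(\mathrm{id},f): f\in\mathrm{Ham}(M,\Omega),\ f(A)\cap A=\emptyset\}$, with $\inf\emptyset=+\infty$. *)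

theory Defs
  imports "HOL-Analysis.Analysis"
begin

definition supp :: "('a::topological_space \<Rightarrow> 'a) \<Rightarrow> 'a set" where
  "supp \<phi> = closure {x. \<phi> x \<noteq> x}"

text \<open>H is a group (under composition) of homeomorphisms of the space.
  This is the abstract structure of Ham(M,Omega) used by the statement.\<close>
definition homeo_group :: "('a::topological_space \<Rightarrow> 'a) set \<Rightarrow> bool" where
  "homeo_group H \<longleftrightarrow>
     id \<in> H \<and>
     (\<forall>f\<in>H. \<forall>g\<in>H. f \<circ> g \<in> H) \<and>
     (\<forall>f\<in>H. inv f \<in> H) \<and>
     (\<forall>f\<in>H. bij f \<and> continuous_on UNIV f \<and> continuous_on UNIV (inv f))"

definition bi_invariant_pseudometric ::
    "('a \<Rightarrow> 'a) set \<Rightarrow> (('a \<Rightarrow> 'a) \<Rightarrow> ('a \<Rightarrow> 'a) \<Rightarrow> real) \<Rightarrow> bool" where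
  "bi_invariant_pseudometric H \<rho> \<longleftrightarrow>
     (\<forall>\<phi>\<in>H. \<forall>\<psi>\<in>H. \<rho> \<phi> \<psi> \<ge> 0) \<and>
     (\<forall>\<phi>\<in>H. \<forall>\<psi>\<in>H. \<rho> \<phi> \<psi> = \<rho> \<psi> \<phi>) \<and>
     (\<forall>\<phi>\<in>H. \<rho> \<phi> \<phi> = 0) \<and>
     (\<forall>\<phi>\<in>H. \<forall>\<psi>\<in>H. \<forall>\<xi>\<in>H. \<rho> \<phi> \<xi> \<le> \<rho> \<phi> \<psi> + \<rho> \<psi> \<xi>) \<and>
     (\<forall>\<phi>\<in>H. \<forall>\<psi>\<in>H. \<forall>\<theta>\<in>H.
        \<rho> \<phi> \<psi> = \<rho> (\<phi> \<circ> \<theta>) (\<psi> \<circ> \<theta>) \<and> \<rho> \<phi> \<psi> = \<rho> (\<theta> \<circ> \<phi>) (\<theta> \<circ> \<psi>))"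

text \<open>Displacement energy, valued in the extended reals so that Inf {} = +infinity.\<close>
definition displacement_energy ::
    "('a \<Rightarrow> 'a) set \<Rightarrow> (('a \<Rightarrow> 'a) \<Rightarrow> ('a \<Rightarrow> 'a) \<Rightarrow> real) \<Rightarrow> 'a set \<Rightarrow> ereal" where
  "displacement_energy H \<rho> A = Inf {ereal (\<rho> id f) | f. f \<in> H \<and> f ` A \<inter> A = {}}"

definition commutator :: "('a \<Rightarrow> 'a) \<Rightarrow> ('a \<Rightarrow> 'a) \<Rightarrow> ('a \<Rightarrow> 'a)" where
  "commutator \<phi> \<psi> = inv \<psi> \<circ> inv \<phi> \<circ> \<psi> \<circ> \<phi>"

end

theory Submission
  imports Defs
begin

text \<open>If \<open>f\<close> displaces \<open>A\<close>, then \<open>g = f \<phi> f\<^sup>-\<^sup>1\<close> is supported in \<open>f(A)\<close>, away from \<open>A\<close>,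
  so \<open>g\<close> commutes with \<open>\<psi>\<close>. Bi-invariance gives \<open>\<rho>(\<phi>, g) \<le> \<rho>(id, f) + \<rho>(id, f\<^sup>-\<^sup>1) = 2 \<rho>(id, f)\<close>
  and \<open>\<rho>(id, [\<phi>,\<psi>]) = \<rho>(\<phi>\<psi>, \<psi>\<phi>) \<le> \<rho>(\<phi>\<psi>, g\<psi>) + \<rho>(\<psi>g, \<psi>\<phi>) = 2 \<rho>(\<phi>, g)\<close>.
  Taking the infimum over all displacing \<open>f\<close> gives the bound.\<close>

lemma fixed_outside_supp: "x \<notin> supp \<phi> \<Longrightarrow> \<phi> x = x"
  using closure_subset[of "{x. \<phi> x \<noteq> x}"] unfolding supp_def by auto

lemma inj_fixing_set_preserves_complement:
  assumes "inj g" and "\<And>x. x \<in> A \<Longrightarrow> g x = x" and "x \<notin> A"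
  shows "g x \<notin> A"
proof
  assume "g x \<in> A"
  then have "g (g x) = g x" by (rule assms(2))
  then have "g x = x" by (rule injD[OF assms(1)])
  with \<open>g x \<in> A\<close> \<open>x \<notin> A\<close> show False by simp
qed

lemma commute_if_disjoint_moved_sets:
  assumes "inj f" "inj g"
    and f_fixed: "\<And>x. x \<notin> A \<Longrightarrow> f x = x"
    and g_fixed: "\<And>x. x \<in> A \<Longrightarrow> g x = x"
  shows "f \<circ> g = g \<circ> f"
proof
  fix x
  show "(f \<circ> g) x = (g \<circ> f) x"
  proof (cases "x \<in> A")
    case True
    have "f x \<notin> - A"
      by (rule inj_fixing_set_preserves_complement[OF assms(1)]) (use f_fixed True in auto)
    then show ?thesis using True g_fixed by simp
  next
    case False
    then have "g x \<notin> A"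
      using inj_fixing_set_preserves_complement[OF assms(2) g_fixed] by blast
    then show ?thesis using False f_fixed by simp
  qed
qed

lemma conjugate_fixes_displaced_set:
  assumes "surj f" and displaces: "f ` A \<inter> A = {}"
    and \<phi>_fixed: "\<And>x. x \<notin> A \<Longrightarrow> \<phi> x = x" and "y \<in> A"
  shows "(f \<circ> \<phi> \<circ> inv f) y = y"
proof -
  have f_inv: "f (inv f y) = y" using assms(1) by (simp add: surj_f_inv_f)
  with displaces \<open>y \<in> A\<close> have "inv f y \<notin> A" by (metis IntI emptyE imageI)
  then show ?thesis using \<phi>_fixed f_inv by simp
qed

locale bi_invariant_group =
  fixes H :: "('a::topological_space \<Rightarrow> 'a) set"
    and \<rho> :: "('a \<Rightarrow> 'a) \<Rightarrow> ('a \<Rightarrow> 'a) \<Rightarrow> real"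
  assumes group: "homeo_group H"
    and pseudometric: "bi_invariant_pseudometric H \<rho>"
begin

lemma id_in: "id \<in> H"
  and comp_in: "f \<in> H \<Longrightarrow> g \<in> H \<Longrightarrow> f \<circ> g \<in> H"
  and inv_in: "f \<in> H \<Longrightarrow> inv f \<in> H"
  and bij: "f \<in> H \<Longrightarrow> bij f"
  using group unfolding homeo_group_def by auto

lemma comp_inv_cancel:
  assumes "f \<in> H"
  shows "f \<circ> inv f = id"
  using bij_is_surj[OF bij[OF assms]] by (simp add: surj_iff)

lemma dist_sym: "f \<in> H \<Longrightarrow> g \<in> H \<Longrightarrow> \<rho> f g = \<rho> g f"
  and dist_triangle: "f \<in> H \<Longrightarrow> g \<in> H \<Longrightarrow> h \<in> H \<Longrightarrow> \<rho> f h \<le> \<rho> f g + \<rho> g h"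
  and dist_right_invariant: "f \<in> H \<Longrightarrow> g \<in> H \<Longrightarrow> h \<in> H \<Longrightarrow> \<rho> (f \<circ> h) (g \<circ> h) = \<rho> f g"
  and dist_left_invariant: "f \<in> H \<Longrightarrow> g \<in> H \<Longrightarrow> h \<in> H \<Longrightarrow> \<rho> (h \<circ> f) (h \<circ> g) = \<rho> f g"
  using pseudometric unfolding bi_invariant_pseudometric_def by metis+

lemma dist_id_inv:
  assumes "f \<in> H"
  shows "\<rho> id (inv f) = \<rho> id f"
proof -
  have "\<rho> id (inv f) = \<rho> (f \<circ> id) (f \<circ> inv f)"
    using assms by (intro dist_left_invariant[symmetric] id_in inv_in)
  also have "\<dots> = \<rho> id f"
    using assms by (simp add: comp_inv_cancel dist_sym[OF assms id_in])
  finally show ?thesis .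
qed

lemma dist_conjugate_le:
  assumes "f \<in> H" "\<phi> \<in> H"
  shows "\<rho> \<phi> (f \<circ> \<phi> \<circ> inv f) \<le> 2 * \<rho> id f"
proof -
  have "\<rho> \<phi> (f \<circ> \<phi> \<circ> inv f) \<le> \<rho> \<phi> (f \<circ> \<phi>) + \<rho> (f \<circ> \<phi>) (f \<circ> \<phi> \<circ> inv f)"
    using assms by (intro dist_triangle comp_in inv_in)
  also have "\<rho> \<phi> (f \<circ> \<phi>) = \<rho> (id \<circ> \<phi>) (f \<circ> \<phi>)"
    by simp
  also have "\<dots> = \<rho> id f"
    using assms by (intro dist_right_invariant id_in)
  also have "\<rho> (f \<circ> \<phi>) (f \<circ> \<phi> \<circ> inv f) = \<rho> (f \<circ> \<phi> \<circ> id) (f \<circ> \<phi> \<circ> inv f)"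
    by simp
  also have "\<dots> = \<rho> id (inv f)"
    using assms by (intro dist_left_invariant id_in comp_in inv_in)
  also have "\<dots> = \<rho> id f"
    using assms(1) by (rule dist_id_inv)
  finally show ?thesis by linarith
qed

lemma dist_id_commutator:
  assumes "\<phi> \<in> H" "\<psi> \<in> H"
  shows "\<rho> id (commutator \<phi> \<psi>) = \<rho> (\<phi> \<circ> \<psi>) (\<psi> \<circ> \<phi>)"
proof -
  have "\<phi> \<circ> \<psi> \<circ> commutator \<phi> \<psi> = (\<phi> \<circ> (\<psi> \<circ> inv \<psi>) \<circ> inv \<phi>) \<circ> \<psi> \<circ> \<phi>"
    unfolding commutator_def by (simp add: o_assoc)
  also have "\<dots> = \<psi> \<circ> \<phi>"
    using assms by (simp add: comp_inv_cancel)
  finally have cancel: "\<phi> \<circ> \<psi> \<circ> commutator \<phi> \<psi> = \<psi> \<circ> \<phi>" .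
  have "\<rho> id (commutator \<phi> \<psi>) = \<rho> (\<phi> \<circ> \<psi> \<circ> id) (\<phi> \<circ> \<psi> \<circ> commutator \<phi> \<psi>)"
    using assms unfolding commutator_def
    by (intro dist_left_invariant[symmetric] id_in comp_in inv_in)
  then show ?thesis
    by (simp only: cancel comp_id)
qed

lemma dist_id_commutator_le:
  assumes "\<phi> \<in> H" "\<psi> \<in> H" "g \<in> H" and commute: "\<psi> \<circ> g = g \<circ> \<psi>"
  shows "\<rho> id (commutator \<phi> \<psi>) \<le> 2 * \<rho> \<phi> g"
proof -
  have "\<rho> id (commutator \<phi> \<psi>) = \<rho> (\<phi> \<circ> \<psi>) (\<psi> \<circ> \<phi>)"
    using assms(1,2) by (rule dist_id_commutator)
  also have "\<dots> \<le> \<rho> (\<phi> \<circ> \<psi>) (g \<circ> \<psi>) + \<rho> (g \<circ> \<psi>) (\<psi> \<circ> \<phi>)"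
    using assms by (intro dist_triangle comp_in)
  also have "\<rho> (\<phi> \<circ> \<psi>) (g \<circ> \<psi>) = \<rho> \<phi> g"
    using assms by (intro dist_right_invariant)
  also have "\<rho> (g \<circ> \<psi>) (\<psi> \<circ> \<phi>) = \<rho> g \<phi>"
    unfolding commute[symmetric] using assms by (intro dist_left_invariant)
  also have "\<rho> g \<phi> = \<rho> \<phi> g"
    using assms by (intro dist_sym)
  finally show ?thesis by linarith
qed

end

theorem lemma2p4:
  fixes H :: "('a::topological_space \<Rightarrow> 'a) set"
    and \<rho> :: "('a \<Rightarrow> 'a) \<Rightarrow> ('a \<Rightarrow> 'a) \<Rightarrow> real"
    and A :: "'a set"
  assumes "homeo_group H"
    and "bi_invariant_pseudometric H \<rho>"
    and "open A" and "A \<noteq> {}"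
    and "\<phi> \<in> H" and "\<psi> \<in> H"
    and "supp \<phi> \<subseteq> A" and "supp \<psi> \<subseteq> A"
  shows "displacement_energy H \<rho> A \<ge> ereal (\<rho> id (commutator \<phi> \<psi>) / 4)"
  unfolding displacement_energy_def
proof (rule Inf_greatest, clarify)
  interpret bi_invariant_group H \<rho> by (rule bi_invariant_group.intro) (fact assms)+
  fix f assume "f \<in> H" and displaces: "f ` A \<inter> A = {}"
  define g where "g = f \<circ> \<phi> \<circ> inv f"
  have "g \<in> H" unfolding g_def using \<open>f \<in> H\<close> assms(5) by (intro comp_in inv_in)
  have "\<psi> \<circ> g = g \<circ> \<psi>"
  proof (rule commute_if_disjoint_moved_sets)
    show "inj \<psi>" "inj g" using bij[OF \<open>\<psi> \<in> H\<close>] bij[OF \<open>g \<in> H\<close>] by (simp_all add: bij_is_inj)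
    show "\<psi> x = x" if "x \<notin> A" for x using that assms(8) fixed_outside_supp by blast
    have \<phi>_fixed: "\<phi> x = x" if "x \<notin> A" for x using that assms(7) fixed_outside_supp by blast
    have "surj f" using bij[OF \<open>f \<in> H\<close>] by (rule bij_is_surj)
    show "g x = x" if "x \<in> A" for x
      unfolding g_def by (rule conjugate_fixes_displaced_set[OF \<open>surj f\<close> displaces \<phi>_fixed that])
  qed
  then have "\<rho> id (commutator \<phi> \<psi>) \<le> 2 * \<rho> \<phi> g"
    by (rule dist_id_commutator_le[OF assms(5,6) \<open>g \<in> H\<close>])
  also have "\<dots> \<le> 4 * \<rho> id f"
    using dist_conjugate_le[OF \<open>f \<in> H\<close> assms(5)] unfolding g_def by simp
  finally show "ereal (\<rho> id (commutator \<phi> \<psi>) / 4) \<le> ereal (\<rho> id f)" by simp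
qed

end
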